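(* For all $n\geq 0$, $$d_n=\sum_{k=0}^{n}(-1)^{(n-k)/2}d_{n,k}\,s_k,$$ where $d_{n,k}=\frac{k+1}{n+1}\binom{n+1}{\frac{n-k}{2}}$ if $n-k$ is even and $d_{n,k}=0$ if $n-k$ is odd (terms with $d_{n,k}=0$ are omitted). Moreover, for each $k\geq 0$, $\sum_{n\geq 0}d_{n,k}x^n=x^kC(x^2)^{k+1}$, where $C(x)=\frac{1-\sqrt{1-4x}}{2x}$.
   Context: Steps: $U=(1,1)$, $D=(1,-1)$, $H=(2,0)$. A Dyck path of length $2n$ is a lattice path from $(0,0)$ to $(2n,0)$ with steps $U,D$ never going below the $x$-axis; a Schröder path of length $2n$ is a lattice path from $(0,0)$ to $(2n,0)$ with steps $U,D,H$ never going below the $x$-axis. Such a path is symmetric if it has a vertex with $x$-coordinate $n$ and is invariant under reflection in the line $x=n$ (reversing the step sequence and interchanging $U$ and $D$ gives the same sequence). $d_n$ = number of symmetric Dyck paths of length $2n$, $s_n$ = number of symmetric Schröder paths of length $2n$. *)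

theory Defs
  imports Complex_Main
begin

datatype step = U | D | H

fun step_width :: "step \<Rightarrow> nat" where
  "step_width U = 1" | "step_width D = 1" | "step_width H = 2"

fun step_rise :: "step \<Rightarrow> int" where
  "step_rise U = 1" | "step_rise D = -1" | "step_rise H = 0"

definition width :: "step list \<Rightarrow> nat" where
  "width p = sum_list (map step_width p)"

definition height :: "step list \<Rightarrow> int" where
  "height p = sum_list (map step_rise p)"

definition schroder_path :: "nat \<Rightarrow> step list \<Rightarrow> bool" where
  "schroder_path n p \<longleftrightarrow> width p = 2 * n \<and> height p = 0 \<and>
     (\<forall>i \<le> length p. height (take i p) \<ge> 0)"

definition dyck_path :: "nat \<Rightarrow> step list \<Rightarrow> bool" where
  "dyck_path n p \<longleftrightarrow> schroder_path n p \<and> set p \<subseteq> {U, D}"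

fun flip :: "step \<Rightarrow> step" where
  "flip U = D" | "flip D = U" | "flip H = H"

definition symmetric_path :: "nat \<Rightarrow> step list \<Rightarrow> bool" where
  "symmetric_path n p \<longleftrightarrow> (\<exists>i \<le> length p. width (take i p) = n) \<and> rev (map flip p) = p"

definition d :: "nat \<Rightarrow> nat" where
  "d n = card {p. dyck_path n p \<and> symmetric_path n p}"

definition s :: "nat \<Rightarrow> nat" where
  "s n = card {p. schroder_path n p \<and> symmetric_path n p}"

definition dnk :: "nat \<Rightarrow> nat \<Rightarrow> real" where
  "dnk n k = (if k \<le> n \<and> even (n - k)
              then (real k + 1) / (real n + 1) * real ((n + 1) choose ((n - k) div 2))
              else 0)"

text \<open>C(x) = (1 - sqrt(1-4x))/(2x), extended continuously by C(0) = 1.\<close>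
definition catC :: "real \<Rightarrow> real" where
  "catC x = (if x = 0 then 1 else (1 - sqrt (1 - 4 * x)) / (2 * x))"

end

theory Submission
  imports Defs
begin

text \<open>
A symmetric path of length 2n is determined by its left half: a path of width n that starts
at height 0, never goes below the axis and may end at any height. Let D n a and S k a count
such halves (Dyck, resp. Schroeder) started at height a. Removing the first step gives
D (n+1) a = D n (a+1) + D n (a-1) and S (k+1) a = S (k-1) a + S k (a+1) + S k (a-1) for a \<ge> 0,
while the signed ballot numbers (-1)^((n-k)/2) d(n,k) satisfy the transposed recurrences.
Hence induction on n gives D n a = \<Sum>k. (-1)^((n-k)/2) d(n,k) S k a for every a, and a = 0
is the identity.

The series G k = \<Sum>n. d(n,k) x^n satisfy G 0 = 1 + x G 1 and G (k+1) = x (G k + G (k+2)),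
and so does x^k C(x^2)^(k+1), because C = 1 + x^2 C^2. Both tend to 0 as k \<rightarrow> \<infinity>, and for
|x| \<le> 1/2 the absolute values of a solution of the homogeneous recurrence are nondecreasing
in k, so the difference vanishes.
\<close>

lemma width_Nil [simp]: "width [] = 0"
  and width_Cons [simp]: "width (x # q) = step_width x + width q"
  and width_append [simp]: "width (p @ q) = width p + width q"
  by (simp_all add: width_def)

lemma height_Nil [simp]: "height [] = 0"
  and height_Cons [simp]: "height (x # q) = step_rise x + height q"
  and height_append [simp]: "height (p @ q) = height p + height q"
  by (simp_all add: height_def)

lemma flip_flip [simp]: "flip (flip x) = x"
  and step_width_flip [simp]: "step_width (flip x) = step_width x"
  and step_rise_flip [simp]: "step_rise (flip x) = - step_rise x"
  by (cases x; simp)+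

lemma width_rev_map_flip [simp]: "width (rev (map flip q)) = width q"
  and height_rev_map_flip [simp]: "height (rev (map flip q)) = - height q"
  by (induction q) auto

lemma length_le_width: "length q \<le> width q"
proof (induction q)
  case (Cons x q)
  then show ?case by (cases x) auto
qed simp

lemma width_eq_0_iff: "width q = 0 \<longleftrightarrow> q = []"
  using length_le_width[of q] by auto

lemma width_take_strict_mono:
  assumes "i < j" "j \<le> length p"
  shows "width (take i p) < width (take j p)"
proof -
  define r where "r = take (j - i) (drop i p)"
  have "take j p = take i p @ r"
    using assms unfolding r_def by (metis le_add_diff_inverse less_imp_le_nat take_add)
  moreover have "0 < width r"
    using assms length_le_width[of r] unfolding r_def by simp
  ultimately show ?thesis by simp
qed

lemma width_take_inj:
  assumes "i \<le> length p" "j \<le> length p" "width (take i p) = width (take j p)"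
  shows "i = j"
  using width_take_strict_mono[of i j p] width_take_strict_mono[of j i p] assms
  by (metis less_irrefl_nat nat_neq_iff)

fun stays_nonneg :: "int \<Rightarrow> step list \<Rightarrow> bool" where
  "stays_nonneg a [] \<longleftrightarrow> 0 \<le> a"
| "stays_nonneg a (x # q) \<longleftrightarrow> 0 \<le> a \<and> stays_nonneg (a + step_rise x) q"

lemma stays_nonneg_start: "stays_nonneg a q \<Longrightarrow> 0 \<le> a"
  by (cases q) auto

lemma stays_nonneg_append:
  "stays_nonneg a (p @ q) \<longleftrightarrow> stays_nonneg a p \<and> stays_nonneg (a + height p) q"
  by (induction p arbitrary: a) (auto simp: stays_nonneg_start add.assoc)

lemma stays_nonneg_rev_map_flip:
  "stays_nonneg (c + height q) (rev (map flip q)) \<longleftrightarrow> stays_nonneg c q"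
proof (induction q arbitrary: c)
  case (Cons x q)
  have "stays_nonneg (c + height (x # q)) (rev (map flip (x # q)))
      \<longleftrightarrow> stays_nonneg (c + step_rise x + height q) (rev (map flip q)) \<and> c + step_rise x \<ge> 0 \<and> c \<ge> 0"
    by (simp add: stays_nonneg_append algebra_simps)
  also have "\<dots> \<longleftrightarrow> stays_nonneg c (x # q)"
    using Cons.IH[of "c + step_rise x"] stays_nonneg_start by auto
  finally show ?case .
qed simp

lemma stays_nonneg_iff_take:
  "stays_nonneg a p \<longleftrightarrow> (\<forall>i \<le> length p. 0 \<le> a + height (take i p))"
proof (induction p arbitrary: a)
  case (Cons x p)
  have "(\<forall>i \<le> length (x # p). 0 \<le> a + height (take i (x # p)))
      \<longleftrightarrow> 0 \<le> a \<and> (\<forall>i \<le> length p. 0 \<le> a + step_rise x + height (take i p))"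
  proof (intro iffI conjI allI impI)
    fix i assume "\<forall>i \<le> length (x # p). 0 \<le> a + height (take i (x # p))"
    from this[rule_format, of 0] this[rule_format, of "Suc i"]
    show "0 \<le> a" and "i \<le> length p \<Longrightarrow> 0 \<le> a + step_rise x + height (take i p)"
      by (simp_all add: add.assoc)
  next
    fix i assume "0 \<le> a \<and> (\<forall>i \<le> length p. 0 \<le> a + step_rise x + height (take i p))"
      and "i \<le> length (x # p)"
    then show "0 \<le> a + height (take i (x # p))" by (cases i) (auto simp: add.assoc)
  qed
  then show ?case using Cons.IH by simp
qed simp

lemma schroder_path_iff:
  "schroder_path n p \<longleftrightarrow> width p = 2 * n \<and> height p = 0 \<and> stays_nonneg 0 p"
  unfolding schroder_path_def using stays_nonneg_iff_take[of 0 p] by simp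

definition mirror_path :: "step list \<Rightarrow> step list" where
  "mirror_path q = q @ rev (map flip q)"

lemma inj_mirror_path: "inj mirror_path"
proof (rule injI)
  fix p q assume eq: "mirror_path p = mirror_path q"
  then have "length p = length q"
    unfolding mirror_path_def by (metis length_append length_map length_rev mult_2 nonzero_mult_div_cancel_left zero_neq_numeral)
  then show "p = q" using eq unfolding mirror_path_def by simp
qed

lemma stays_nonneg_mirror_path: "stays_nonneg 0 (mirror_path q) \<longleftrightarrow> stays_nonneg 0 q"
  unfolding mirror_path_def using stays_nonneg_rev_map_flip[of 0 q] by (simp add: stays_nonneg_append)

lemma set_mirror_path_subset_UD: "set (mirror_path q) \<subseteq> {U, D} \<longleftrightarrow> set q \<subseteq> {U, D}"
proof -
  have "x \<in> {U, D} \<Longrightarrow> flip x \<in> {U, D}" for x by (cases x) auto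
  then show ?thesis unfolding mirror_path_def by auto
qed

text \<open>The vertex at abscissa n must be the middle vertex, because a symmetric path has as
  many steps before it as after it.\<close>

lemma symmetric_schroder_path_iff:
  "schroder_path n p \<and> symmetric_path n p \<longleftrightarrow>
     (\<exists>q. width q = n \<and> stays_nonneg 0 q \<and> p = mirror_path q)"
proof
  assume "schroder_path n p \<and> symmetric_path n p"
  then obtain i where i: "i \<le> length p" "width (take i p) = n" and sym: "rev (map flip p) = p"
    and w: "width p = 2 * n" and nonneg: "stays_nonneg 0 p"
    unfolding symmetric_path_def schroder_path_iff by blast
  define L where "L = length p"
  have "take i p = rev (map flip (drop (L - i) p))"
    by (subst sym[symmetric]) (simp add: take_rev L_def drop_map)
  then have "width (drop (L - i) p) = n" using i by (metis width_rev_map_flip)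
  moreover have "width p = width (take (L - i) p) + width (drop (L - i) p)"
    by (metis width_append append_take_drop_id)
  ultimately have "width (take (L - i) p) = width (take i p)" using w i by simp
  then have mid: "L - i = i" using width_take_inj[of "L - i" p i] i L_def by simp
  define q where "q = take i p"
  have "drop i p = rev (map flip q)"
    by (subst sym[symmetric]) (simp add: drop_rev q_def L_def[symmetric] mid take_map)
  then have "p = mirror_path q" unfolding mirror_path_def q_def by (metis append_take_drop_id)
  moreover have "width q = n" using i q_def by simp
  ultimately show "\<exists>q. width q = n \<and> stays_nonneg 0 q \<and> p = mirror_path q"
    using nonneg stays_nonneg_mirror_path by blast
next
  assume "\<exists>q. width q = n \<and> stays_nonneg 0 q \<and> p = mirror_path q"
  then obtain q where q: "width q = n" "stays_nonneg 0 q" "p = mirror_path q" by blast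
  have "schroder_path n p"
    unfolding schroder_path_iff using q stays_nonneg_mirror_path by (simp add: mirror_path_def)
  moreover have "symmetric_path n p"
    unfolding symmetric_path_def using q
    by (auto simp: mirror_path_def rev_map comp_def intro!: exI[of _ "length q"])
  ultimately show "schroder_path n p \<and> symmetric_path n p" by blast
qed

fun schroder_halves :: "nat \<Rightarrow> int \<Rightarrow> step list list" where
  "schroder_halves 0 a = (if a < 0 then [] else [[]])"
| "schroder_halves (Suc 0) a = (if a < 0 then [] else
     map (Cons U) (schroder_halves 0 (a + 1)) @ map (Cons D) (schroder_halves 0 (a - 1)))"
| "schroder_halves (Suc (Suc m)) a = (if a < 0 then [] else
     map (Cons U) (schroder_halves (Suc m) (a + 1)) @ map (Cons D) (schroder_halves (Suc m) (a - 1))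
     @ map (Cons H) (schroder_halves m a))"

fun dyck_halves :: "nat \<Rightarrow> int \<Rightarrow> step list list" where
  "dyck_halves 0 a = (if a < 0 then [] else [[]])"
| "dyck_halves (Suc n) a = (if a < 0 then [] else
     map (Cons U) (dyck_halves n (a + 1)) @ map (Cons D) (dyck_halves n (a - 1)))"

lemma distinct_schroder_halves: "distinct (schroder_halves m a)"
  by (induction m a rule: schroder_halves.induct) (auto simp: distinct_map)

lemma distinct_dyck_halves: "distinct (dyck_halves m a)"
  by (induction m a rule: dyck_halves.induct) (auto simp: distinct_map)

lemma set_schroder_halves: "set (schroder_halves m a) = {q. width q = m \<and> stays_nonneg a q}"
proof (induction m a rule: schroder_halves.induct)
  case (1 a)
  then show ?case using width_eq_0_iff stays_nonneg_start by auto
next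
  case (2 a)
  have "q \<in> set (schroder_halves (Suc 0) a) \<longleftrightarrow> width q = Suc 0 \<and> stays_nonneg a q" for q
  proof (cases q)
    case (Cons x r)
    then show ?thesis by (cases x) (auto simp: width_eq_0_iff)
  qed auto
  then show ?case by blast
next
  case (3 m a)
  have "q \<in> set (schroder_halves (Suc (Suc m)) a) \<longleftrightarrow> width q = Suc (Suc m) \<and> stays_nonneg a q" for q
  proof (cases q)
    case (Cons x r)
    then show ?thesis using 3 by (cases x) (auto simp: stays_nonneg_start)
  qed auto
  then show ?case by blast
qed

lemma set_dyck_halves: "set (dyck_halves m a) = {q. set q \<subseteq> {U, D} \<and> width q = m \<and> stays_nonneg a q}"
proof (induction m a rule: dyck_halves.induct)
  case (1 a)
  then show ?case using width_eq_0_iff stays_nonneg_start by auto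
next
  case (2 n a)
  have "q \<in> set (dyck_halves (Suc n) a) \<longleftrightarrow> set q \<subseteq> {U, D} \<and> width q = Suc n \<and> stays_nonneg a q" for q
  proof (cases q)
    case (Cons x r)
    then show ?thesis using 2 by (cases x) (auto simp: stays_nonneg_start)
  qed auto
  then show ?case by blast
qed

lemma s_eq_length_schroder_halves: "s n = length (schroder_halves n 0)"
proof -
  have "{p. schroder_path n p \<and> symmetric_path n p} = mirror_path ` set (schroder_halves n 0)"
    unfolding set_schroder_halves using symmetric_schroder_path_iff by auto
  then show ?thesis
    unfolding s_def by (simp add: card_image inj_on_subset[OF inj_mirror_path] distinct_card distinct_schroder_halves)
qed

lemma d_eq_length_dyck_halves: "d n = length (dyck_halves n 0)"
proof -
  have "{p. dyck_path n p \<and> symmetric_path n p} = mirror_path ` set (dyck_halves n 0)"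
    unfolding dyck_path_def set_dyck_halves
    using symmetric_schroder_path_iff set_mirror_path_subset_UD by fastforce
  then show ?thesis
    unfolding d_def by (simp add: card_image inj_on_subset[OF inj_mirror_path] distinct_card distinct_dyck_halves)
qed

text \<open>Extending the binomial coefficient by 0 to negative arguments turns d(k+2m, k) into the
  ballot difference below, and Pascal's rule then gives the recurrences of \<open>dnk\<close>.\<close>

definition ext_choose :: "nat \<Rightarrow> int \<Rightarrow> real" where
  "ext_choose n m = (if m < 0 then 0 else real (n choose nat m))"

lemma ext_choose_neg: "m < 0 \<Longrightarrow> ext_choose n m = 0"
  by (simp add: ext_choose_def)

lemma ext_choose_Suc: "ext_choose (Suc n) m = ext_choose n m + ext_choose n (m - 1)"
proof (cases "m \<le> 0")
  case True
  then show ?thesis by (cases "m = 0") (auto simp: ext_choose_def)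
next
  case False
  define k where "k = nat m - 1"
  have "m = int (Suc k)" and "nat (m - 1) = k" using False unfolding k_def by simp_all
  then show ?thesis by (simp add: ext_choose_def nat_add_distrib)
qed

lemma dnk_eq_0: "\<not> (k \<le> n \<and> even (n - k)) \<Longrightarrow> dnk n k = 0"
  unfolding dnk_def by (rule if_not_P)

lemma dnk_nonneg: "0 \<le> dnk n k"
  by (simp add: dnk_def)

lemma dnk_le_pow2: "dnk n k \<le> 2 ^ (n + 1)"
proof (cases "k \<le> n \<and> even (n - k)")
  case True
  have "dnk n k = (real k + 1) / (real n + 1) * real ((n + 1) choose ((n - k) div 2))"
    unfolding dnk_def using True by (rule if_P)
  also have "\<dots> \<le> 1 * real ((n + 1) choose ((n - k) div 2))"
    using True by (intro mult_right_mono) auto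
  also have "\<dots> \<le> 2 ^ (n + 1)"
  proof -
    have "real ((n + 1) choose ((n - k) div 2)) \<le> real ((2::nat) ^ (n + 1))"
      by (simp only: of_nat_le_iff binomial_le_pow2)
    then show ?thesis by simp
  qed
  finally show ?thesis .
qed (simp add: dnk_eq_0)

lemma dnk_eq_ext_choose_diff:
  "dnk (k + 2 * m) k = ext_choose (k + 2 * m) (int m) - ext_choose (k + 2 * m) (int m - 1)"
proof (cases m)
  case 0
  then show ?thesis by (simp add: dnk_def ext_choose_def)
next
  case (Suc j)
  define n where "n = k + 2 * m"
  have n: "n = k + 2 * j + 2" using Suc n_def by simp
  have "dnk n k = (real k + 1) / (real n + 1) * real (Suc n choose Suc j)"
    unfolding dnk_def using n by simp
  also have "real (Suc n choose Suc j) = (real n + 1) * (real (n choose j) / real (Suc j))"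
    using Suc_times_binomial_eq[of n j] by (simp add: field_simps flip: of_nat_mult)
  finally have lhs: "dnk n k = (real k + 1) * real (n choose j) / real (Suc j)"
    by (simp add: add.commute[of 1])
  have "Suc j * (n choose Suc j) = (n - j) * (n choose j)"
    using times_binomial_minus1_eq[of "Suc j" n] binomial_absorb_comp[of n j] by simp
  then have "real (n choose Suc j) = (real k + real j + 2) * real (n choose j) / real (Suc j)"
    using n by (simp add: field_simps flip: of_nat_mult)
  then have "ext_choose n (int m) - ext_choose n (int m - 1) = (real k + 1) * real (n choose j) / real (Suc j)"
    using Suc by (simp add: ext_choose_def field_simps nat_add_distrib)
  then show ?thesis using lhs n_def by simp
qed

lemma dnk_0_left: "dnk 0 k = (if k = 0 then 1 else 0)"
  by (simp add: dnk_def)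

lemma dnk_Suc_Suc: "dnk (Suc n) (Suc j) = dnk n j + dnk n (Suc (Suc j))"
proof (cases "j \<le> n \<and> even (n - j)")
  case True
  define m where "m = (n - j) div 2"
  have n: "n = j + 2 * m" using True m_def by auto
  have "dnk (Suc n) (Suc j) = ext_choose (Suc n) (int m) - ext_choose (Suc n) (int m - 1)"
    using dnk_eq_ext_choose_diff[of "Suc j" m] n by simp
  also have "\<dots> = ext_choose n (int m) - ext_choose n (int m - 2)"
    by (simp add: ext_choose_Suc algebra_simps)
  moreover have "dnk n j = ext_choose n (int m) - ext_choose n (int m - 1)"
    using dnk_eq_ext_choose_diff[of j m] n by simp
  moreover have "dnk n (Suc (Suc j)) = ext_choose n (int m - 1) - ext_choose n (int m - 2)"
  proof (cases m)
    case 0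
    then show ?thesis using n by (simp add: dnk_eq_0 ext_choose_neg)
  next
    case (Suc i)
    then show ?thesis using n dnk_eq_ext_choose_diff[of "Suc (Suc j)" i] by (simp add: algebra_simps)
  qed
  ultimately show ?thesis by simp
qed (auto simp: dnk_eq_0)

lemma dnk_Suc_0: "dnk (Suc n) 0 = dnk n 1"
proof (cases "odd n")
  case True
  then obtain m where n: "n = 1 + 2 * m" by (metis oddE add.commute)
  have "dnk (Suc n) 0 = ext_choose (Suc n) (int m + 1) - ext_choose (Suc n) (int m)"
    using dnk_eq_ext_choose_diff[of 0 "Suc m"] n by (simp add: ac_simps)
  also have "\<dots> = ext_choose n (int m + 1) - ext_choose n (int m - 1)"
    by (simp add: ext_choose_Suc algebra_simps)
  also have "ext_choose n (int m + 1) = ext_choose n (int m)"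
    using binomial_symmetric[of "Suc m" n] n by (simp add: ext_choose_def nat_add_distrib)
  finally show ?thesis using dnk_eq_ext_choose_diff[of 1 m] n by simp
next
  case False
  then show ?thesis by (cases n) (auto simp: dnk_eq_0)
qed

definition signed_dnk :: "nat \<Rightarrow> nat \<Rightarrow> real" where
  "signed_dnk n k = (-1) ^ ((n - k) div 2) * dnk n k"

lemma signed_dnk_eq_0: "n < k \<Longrightarrow> signed_dnk n k = 0"
  by (simp add: signed_dnk_def dnk_eq_0)

lemma signed_dnk_0_left: "signed_dnk 0 k = (if k = 0 then 1 else 0)"
  by (simp add: signed_dnk_def dnk_0_left)

lemma signed_dnk_Suc_Suc: "signed_dnk (Suc n) (Suc j) = signed_dnk n j - signed_dnk n (Suc (Suc j))"
proof (cases "Suc (Suc j) \<le> n")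
  case True
  then have "(n - j) div 2 = Suc ((n - Suc (Suc j)) div 2)" by (simp add: Suc_diff_le div_Suc)
  then show ?thesis by (simp add: signed_dnk_def dnk_Suc_Suc algebra_simps)
qed (simp add: signed_dnk_def dnk_Suc_Suc dnk_eq_0)

lemma signed_dnk_Suc_0: "signed_dnk (Suc n) 0 = - signed_dnk n 1"
proof (cases "odd n")
  case True
  then obtain m where "n = 2 * m + 1" by (rule oddE)
  then show ?thesis by (simp add: signed_dnk_def dnk_Suc_0)
next
  case False
  then show ?thesis by (cases n) (auto simp: signed_dnk_def dnk_Suc_0 dnk_eq_0)
qed

lemma sum_lessThan_eq_if_vanishing:
  fixes g :: "nat \<Rightarrow> real"
  assumes "\<And>k. M \<le> k \<Longrightarrow> g k = 0" "M \<le> N"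
  shows "sum g {..<N} = sum g {..<M}"
  using assms by (intro sum.mono_neutral_right) auto

text \<open>Any bound N > n can be used in the sum, as \<open>signed_dnk n k\<close> vanishes for k > n;
  the freedom in N absorbs the index shifts of the induction step.\<close>

lemma signed_dnk_inversion:
  fixes D S :: "nat \<Rightarrow> int \<Rightarrow> real"
  assumes D_0: "\<And>a. D 0 a = S 0 a"
    and D_Suc: "\<And>n a. 0 \<le> a \<Longrightarrow> D (Suc n) a = D n (a + 1) + D n (a - 1)"
    and S_Suc: "\<And>k a. 0 \<le> a \<Longrightarrow>
                  S (Suc k) a = (if k = 0 then 0 else S (k - 1) a) + S k (a + 1) + S k (a - 1)"
    and D_neg: "\<And>n a. a < 0 \<Longrightarrow> D n a = 0"
    and S_neg: "\<And>k a. a < 0 \<Longrightarrow> S k a = 0"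
  shows "n < N \<Longrightarrow> D n a = (\<Sum>k<N. signed_dnk n k * S k a)"
proof (induction n arbitrary: a N)
  case 0
  then have "(\<Sum>k<N. signed_dnk 0 k * S k a) = (\<Sum>k<1. signed_dnk 0 k * S k a)"
    by (intro sum_lessThan_eq_if_vanishing) (auto simp: signed_dnk_0_left)
  then show ?case by (simp add: signed_dnk_0_left D_0)
next
  case (Suc n)
  show ?case
  proof (cases "a < 0")
    case True
    then show ?thesis by (simp add: D_neg S_neg)
  next
    case False
    then have a: "0 \<le> a" by simp
    obtain M where M: "N = Suc M" "n < M" using Suc.prems by (cases N) auto
    define T where "T j = (if j = 0 then 0 else S (j - 1) a)" for j
    have "(\<Sum>k<N. signed_dnk (Suc n) k * S k a)
        = - signed_dnk n 1 * S 0 a + (\<Sum>i<M. signed_dnk n i * S (Suc i) a)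
            - (\<Sum>i<M. signed_dnk n (Suc (Suc i)) * S (Suc i) a)"
      unfolding M by (simp add: sum.lessThan_Suc_shift signed_dnk_Suc_0 signed_dnk_Suc_Suc
          algebra_simps sum_subtractf del: sum.lessThan_Suc)
    also have "(\<Sum>i<M. signed_dnk n (Suc (Suc i)) * S (Suc i) a)
        = (\<Sum>j<Suc (Suc M). signed_dnk n j * T j) - signed_dnk n 1 * S 0 a"
      by (simp add: sum.lessThan_Suc_shift T_def del: sum.lessThan_Suc)
    also have "(\<Sum>j<Suc (Suc M). signed_dnk n j * T j) = (\<Sum>j<M. signed_dnk n j * T j)"
      using M by (intro sum_lessThan_eq_if_vanishing) (auto simp: signed_dnk_eq_0)
    finally have "(\<Sum>k<N. signed_dnk (Suc n) k * S k a)
        = (\<Sum>i<M. signed_dnk n i * (S (Suc i) a - T i))"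
      by (simp add: algebra_simps sum_subtractf)
    also have "\<dots> = (\<Sum>i<M. signed_dnk n i * S i (a + 1)) + (\<Sum>i<M. signed_dnk n i * S i (a - 1))"
      by (simp add: S_Suc[OF a] T_def algebra_simps sum.distrib)
    also have "\<dots> = D (Suc n) a"
      using Suc.IH M by (simp add: D_Suc[OF a])
    finally show ?thesis by simp
  qed
qed

theorem d_eq_alternating_dnk_sum: "real (d n) = (\<Sum>k = 0..n. (-1) ^ ((n - k) div 2) * dnk n k * real (s k))"
proof -
  let ?D = "\<lambda>n (a::int). real (length (dyck_halves n a))"
  let ?S = "\<lambda>k (a::int). real (length (schroder_halves k a))"
  have D_neg: "?D n a = 0" if "a < 0" for n a
    using that by (cases n) auto
  have S_neg: "?S k a = 0" if "a < 0" for k a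
    using that by (cases "(k, a)" rule: schroder_halves.cases) auto
  have S_Suc: "?S (Suc k) a = (if k = 0 then 0 else ?S (k - 1) a) + ?S k (a + 1) + ?S k (a - 1)"
    if "0 \<le> a" for k a
    using that by (cases k) auto
  have "?D n 0 = (\<Sum>k<Suc n. signed_dnk n k * ?S k 0)"
    by (rule signed_dnk_inversion[OF _ _ S_Suc D_neg S_neg]) auto
  then show ?thesis
    by (simp add: d_eq_length_dyck_halves s_eq_length_schroder_halves signed_dnk_def
        atLeast0AtMost lessThan_Suc_atMost mult.assoc)
qed

lemma catC_eq_2_div: "y \<le> 1/4 \<Longrightarrow> catC y = 2 / (1 + sqrt (1 - 4 * y))"
proof (cases "y = 0")
  case False
  assume "y \<le> 1/4"
  define r where "r = sqrt (1 - 4 * y)"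
  have "0 \<le> r" "(1 - r) * (1 + r) = 4 * y"
    using \<open>y \<le> 1/4\<close> by (simp_all add: r_def algebra_simps flip: power2_eq_square)
  then have "(1 - r) / (2 * y) = 2 / (1 + r)" using False by (simp add: field_simps)
  then show ?thesis using False by (simp add: catC_def r_def)
qed (simp add: catC_def)

lemma catC_equation: "y \<le> 1/4 \<Longrightarrow> catC y = 1 + y * catC y ^ 2"
proof -
  assume y: "y \<le> 1/4"
  define t where "t = 1 + sqrt (1 - 4 * y)"
  have "0 < t" using y by (simp add: t_def add_pos_nonneg)
  have "y = (2 - t) * t / 4"
    using y by (simp add: t_def algebra_simps flip: power2_eq_square)
  then have "1 + y * (2 / t)\<^sup>2 = 2 / t"
    using \<open>0 < t\<close> by (simp add: field_simps power2_eq_square)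
  moreover have "catC y = 2 / t" using catC_eq_2_div[OF y] by (simp add: t_def)
  ultimately show ?thesis by simp
qed

lemma catC_bounds: "y \<le> 1/4 \<Longrightarrow> 0 < catC y \<and> catC y \<le> 2"
proof -
  assume y: "y \<le> 1/4"
  define t where "t = 1 + sqrt (1 - 4 * y)"
  have "1 \<le> t" using y by (simp add: t_def)
  moreover have "catC y = 2 / t" using catC_eq_2_div[OF y] by (simp add: t_def)
  ultimately show ?thesis by (simp add: divide_le_eq)
qed

definition dnk_series :: "real \<Rightarrow> nat \<Rightarrow> real" where
  "dnk_series x k = (\<Sum>n. dnk n k * x ^ n)"

lemma abs_dnk_term_le: "\<bar>dnk n k * x ^ n\<bar> \<le> 2 * (2 * \<bar>x\<bar>) ^ n"
proof -
  have "\<bar>dnk n k * x ^ n\<bar> = dnk n k * \<bar>x\<bar> ^ n" by (simp add: dnk_nonneg abs_mult power_abs)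
  also have "\<dots> \<le> 2 ^ (n + 1) * \<bar>x\<bar> ^ n" by (intro mult_right_mono dnk_le_pow2) simp
  also have "\<dots> = 2 * (2 * \<bar>x\<bar>) ^ n" by (simp add: power_mult_distrib)
  finally show ?thesis .
qed

lemma homogeneous_recurrence_vanishes:
  fixes x :: real and e :: "nat \<Rightarrow> real"
  assumes x: "\<bar>x\<bar> \<le> 1/2"
    and e_0: "e 0 = x * e 1"
    and e_Suc: "\<And>j. e (Suc j) = x * (e j + e (Suc (Suc j)))"
    and lim: "e \<longlonglongrightarrow> 0"
  shows "e j = 0"
proof -
  have "\<bar>e j\<bar> \<le> \<bar>e (Suc j)\<bar>" for j
  proof (induction j)
    case 0
    have "\<bar>e 0\<bar> = \<bar>x\<bar> * \<bar>e 1\<bar>" using e_0 by (simp add: abs_mult)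
    also have "\<dots> \<le> \<bar>e 1\<bar>" using x by (intro mult_left_le_one_le) auto
    finally show ?case by simp
  next
    case (Suc j)
    have "\<bar>e (Suc j)\<bar> \<le> \<bar>x\<bar> * (\<bar>e j\<bar> + \<bar>e (Suc (Suc j))\<bar>)"
      using e_Suc[of j] by (simp add: abs_mult mult_left_mono abs_triangle_ineq)
    also have "\<dots> \<le> 1/2 * (\<bar>e j\<bar> + \<bar>e (Suc (Suc j))\<bar>)" using x by (intro mult_right_mono) auto
    finally show ?case using Suc.IH by simp
  qed
  then have "incseq (\<lambda>j. \<bar>e j\<bar>)" by (rule incseq_SucI)
  moreover have "(\<lambda>j. \<bar>e j\<bar>) \<longlonglongrightarrow> 0" using tendsto_rabs[OF lim] by simp
  ultimately have "\<bar>e j\<bar> \<le> 0" by (rule incseq_le)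
  then show ?thesis by simp
qed

context
  fixes x :: real
  assumes x: "\<bar>x\<bar> < 1/2"
begin

lemma sums_dnk_series: "(\<lambda>n. dnk n k * x ^ n) sums dnk_series x k"
proof -
  have "summable (\<lambda>n. 2 * (2 * \<bar>x\<bar>) ^ n)" using x by (intro summable_mult summable_geometric) simp
  then have "summable (\<lambda>n. dnk n k * x ^ n)"
    by (rule summable_comparison_test') (simp only: real_norm_def abs_dnk_term_le)
  then show ?thesis unfolding dnk_series_def by (rule summable_sums)
qed

lemma dnk_series_0: "dnk_series x 0 = 1 + x * dnk_series x 1"
proof -
  have "(\<lambda>n. dnk (Suc n) 0 * x ^ Suc n) sums (dnk_series x 0 - 1)"
    using sums_dnk_series[of 0] by (subst sums_Suc_iff) (simp add: dnk_0_left)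
  moreover have "(\<lambda>n. dnk (Suc n) 0 * x ^ Suc n) sums (x * dnk_series x 1)"
    using sums_mult[OF sums_dnk_series[of 1], of x] by (simp add: dnk_Suc_0 algebra_simps)
  ultimately show ?thesis using sums_unique2 by fastforce
qed

lemma dnk_series_Suc:
  "dnk_series x (Suc k) = x * (dnk_series x k + dnk_series x (Suc (Suc k)))"
proof -
  have "(\<lambda>n. dnk (Suc n) (Suc k) * x ^ Suc n) sums dnk_series x (Suc k)"
    using sums_dnk_series[of "Suc k"] by (subst sums_Suc_iff) (simp add: dnk_0_left)
  moreover have "(\<lambda>n. dnk (Suc n) (Suc k) * x ^ Suc n) sums (x * (dnk_series x k + dnk_series x (Suc (Suc k))))"
    using sums_mult[OF sums_add[OF sums_dnk_series[of k] sums_dnk_series[of "Suc (Suc k)"]], of x]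
    by (simp add: dnk_Suc_Suc algebra_simps)
  ultimately show ?thesis using sums_unique2 by fastforce
qed

lemma abs_dnk_series_le: "\<bar>dnk_series x k\<bar> \<le> (2 * \<bar>x\<bar>) ^ k * (2 / (1 - 2 * \<bar>x\<bar>))"
proof -
  have "(\<Sum>n<k. dnk n k * x ^ n) = 0" by (intro sum.neutral) (auto simp: dnk_eq_0)
  then have shifted: "(\<lambda>i. dnk (i + k) k * x ^ (i + k)) sums dnk_series x k"
    using sums_iff_shift[of "\<lambda>n. dnk n k * x ^ n" k] sums_dnk_series[of k] by simp
  have geom: "(\<lambda>i. (2 * \<bar>x\<bar>) ^ k * 2 * (2 * \<bar>x\<bar>) ^ i) sums ((2 * \<bar>x\<bar>) ^ k * 2 * (1 / (1 - 2 * \<bar>x\<bar>)))"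
    using x by (intro sums_mult geometric_sums) simp
  have "\<bar>dnk_series x k\<bar> = norm (\<Sum>i. dnk (i + k) k * x ^ (i + k))"
    by (simp add: sums_unique[OF shifted])
  also have "\<dots> \<le> (\<Sum>i. (2 * \<bar>x\<bar>) ^ k * 2 * (2 * \<bar>x\<bar>) ^ i)"
    using abs_dnk_term_le[of "_ + k" k x] sums_summable[OF geom]
    by (intro norm_suminf_le) (simp_all add: power_add algebra_simps)
  also have "\<dots> = (2 * \<bar>x\<bar>) ^ k * (2 / (1 - 2 * \<bar>x\<bar>))" using sums_unique[OF geom] by simp
  finally show ?thesis .
qed

lemma dnk_series_tendsto_0: "(\<lambda>k. dnk_series x k) \<longlonglongrightarrow> 0"
proof (rule tendsto_0_le)
  show "(\<lambda>k. (2 * \<bar>x\<bar>) ^ k) \<longlonglongrightarrow> 0" using x by (intro LIMSEQ_power_zero) simp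
  show "\<forall>\<^sub>F k in sequentially. norm (dnk_series x k) \<le> norm ((2 * \<bar>x\<bar>) ^ k) * (2 / (1 - 2 * \<bar>x\<bar>))"
    using abs_dnk_series_le by (simp add: power_abs)
qed

lemma dnk_generating_function: "(\<lambda>n. dnk n k * x ^ n) sums (x ^ k * catC (x\<^sup>2) ^ (k + 1))"
proof -
  define c where "c = catC (x\<^sup>2)"
  have "\<bar>x\<bar>\<^sup>2 \<le> (1/2)\<^sup>2" using x by (intro power_mono) auto
  then have "x\<^sup>2 \<le> 1/4" by (simp add: power2_eq_square)
  then have c: "c = 1 + x\<^sup>2 * c\<^sup>2" "0 < c" "c \<le> 2"
    unfolding c_def using catC_equation catC_bounds by blast+
  define P where "P j = x ^ j * c ^ Suc j" for j
  have P_0: "P 0 = 1 + x * P 1"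
    using c(1) by (simp add: P_def power2_eq_square algebra_simps)
  have P_Suc: "P (Suc j) = x * (P j + P (Suc (Suc j)))" for j
  proof -
    have "P (Suc j) = x * P j * (1 + x\<^sup>2 * c\<^sup>2)" by (subst c(1)[symmetric]) (simp add: P_def)
    moreover have "P (Suc (Suc j)) = x\<^sup>2 * c\<^sup>2 * P j" by (simp add: P_def power2_eq_square)
    ultimately show ?thesis by (simp add: algebra_simps)
  qed
  have "\<bar>x * c\<bar> < 1"
  proof -
    have "\<bar>x * c\<bar> \<le> \<bar>x\<bar> * 2" using c by (simp add: abs_mult mult_left_mono)
    then show ?thesis using x by simp
  qed
  then have "(\<lambda>j. (x * c) ^ j * c) \<longlonglongrightarrow> 0" by (intro tendsto_mult_left_zero LIMSEQ_power_zero) simp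
  moreover have "P = (\<lambda>j. (x * c) ^ j * c)" by (simp add: P_def fun_eq_iff power_mult_distrib)
  ultimately have P_lim: "P \<longlonglongrightarrow> 0" by simp
  have "dnk_series x j - P j = 0" for j
  proof (rule homogeneous_recurrence_vanishes[of x])
    show "\<bar>x\<bar> \<le> 1/2" using x by simp
    show "dnk_series x 0 - P 0 = x * (dnk_series x 1 - P 1)"
      using dnk_series_0 P_0 by (simp add: algebra_simps)
    show "dnk_series x (Suc j) - P (Suc j)
        = x * ((dnk_series x j - P j) + (dnk_series x (Suc (Suc j)) - P (Suc (Suc j))))" for j
      using dnk_series_Suc[of j] P_Suc[of j] by (simp add: algebra_simps)
    show "(\<lambda>j. dnk_series x j - P j) \<longlonglongrightarrow> 0"
      using tendsto_diff[OF dnk_series_tendsto_0 P_lim] by simp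
  qed
  then show ?thesis using sums_dnk_series[of k] by (simp add: P_def c_def)
qed

end

theorem theorem3p4:
  shows "(\<forall>n. real (d n) = (\<Sum>k = 0..n. (-1) ^ ((n - k) div 2) * dnk n k * real (s k)))
       \<and> (\<forall>k (x::real). \<bar>x\<bar> < 1/2 \<longrightarrow>
            (\<lambda>n. dnk n k * x ^ n) sums (x ^ k * catC (x^2) ^ (k + 1)))"
  using d_eq_alternating_dnk_sum dnk_generating_function by blast

end
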